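(* Let $k\ge 3$, let $H$ be a connected $k$-uniform hypergraph on vertex set $V$, and let $y$ and $x$ be the principal eigenvectors of $H$ and of $\partial^*H$, respectively. Put $\hat y=(y_v^k)_{v\in V}$ and $\hat x=(x_v^2)_{v\in V}$. Then \[ D(\hat y,\hat x):=\max_{v\in V}\,|y_v^k-x_v^2|\le \tfrac12 . \] Moreover, if $\Delta_k:=\sup_{H} D(\hat y,\hat x)$, the supremum taken over all connected $k$-uniform hypergraphs $H$, then $\lim_{k\to\infty}\Delta_k=\tfrac12$.
   Context: For a connected $k$-uniform hypergraph $H=([n],E)$, writing $x^e=\prod_{v\in e}x_v$, its principal eigenvector is the unique strictly positive $y$ with $\|y\|_k=1$ and $\rho\, y_i^{k-1}=\sum_{e\ni i}y^{e\setminus\{i\}}$ for all $i$, where $\rho=\max_{\|z\|_k^k=1}k\sum_{e\in E}z^e$. The clique-shadow $\partial^*H$ is the multigraph on $[n]$ in which $\{u,v\}$ has multiplicity $\mu(uv)=|\{e\in E:u,v\in e\}|$; its principal eigenvector is the positive Perron eigenvector of its adjacency matrix (entries $\mu(uv)$), normalized to unit $2$-norm. *)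

theory Defs
  imports Complex_Main
begin

definition uniform_hypergraph :: "nat \<Rightarrow> nat \<Rightarrow> nat set set \<Rightarrow> bool" where
  "uniform_hypergraph k n E \<longleftrightarrow> (\<forall>e\<in>E. e \<subseteq> {..<n} \<and> card e = k)"

definition hg_connected :: "nat \<Rightarrow> nat set set \<Rightarrow> bool" where
  "hg_connected n E \<longleftrightarrow>
     (\<forall>u<n. \<forall>v<n. (u, v) \<in> {(a, b). \<exists>e\<in>E. a \<in> e \<and> b \<in> e}\<^sup>*)"

text \<open>rho = max over ||z||_k^k = 1 of k * sum_e z^e (the max is attained; written as Sup).\<close>
definition hg_spectral_radius :: "nat \<Rightarrow> nat \<Rightarrow> nat set set \<Rightarrow> real" where
  "hg_spectral_radius k n E =
     Sup {real k * (\<Sum>e\<in>E. \<Prod>v\<in>e. z v) | z :: nat \<Rightarrow> real. (\<Sum>i<n. \<bar>z i\<bar> ^ k) = 1}"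

definition hg_principal_eigvec :: "nat \<Rightarrow> nat \<Rightarrow> nat set set \<Rightarrow> (nat \<Rightarrow> real) \<Rightarrow> bool" where
  "hg_principal_eigvec k n E y \<longleftrightarrow>
     (\<forall>i<n. y i > 0) \<and> (\<Sum>i<n. y i ^ k) = 1 \<and>
     (\<forall>i<n. hg_spectral_radius k n E * y i ^ (k - 1)
              = (\<Sum>e\<in>{e\<in>E. i \<in> e}. \<Prod>v\<in>e - {i}. y v))"

text \<open>Edge multiplicity of the clique-shadow multigraph (no loops).\<close>
definition shadow_mult :: "nat set set \<Rightarrow> nat \<Rightarrow> nat \<Rightarrow> real" where
  "shadow_mult E u v = (if u = v then 0 else real (card {e\<in>E. u \<in> e \<and> v \<in> e}))"

definition shadow_principal_eigvec :: "nat \<Rightarrow> nat set set \<Rightarrow> (nat \<Rightarrow> real) \<Rightarrow> bool" where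
  "shadow_principal_eigvec n E x \<longleftrightarrow>
     (\<forall>i<n. x i > 0) \<and> (\<Sum>i<n. x i ^ 2) = 1 \<and>
     (\<exists>lam. \<forall>i<n. (\<Sum>j<n. shadow_mult E i j * x j) = lam * x i)"

definition eigvec_dist :: "nat \<Rightarrow> nat \<Rightarrow> (nat \<Rightarrow> real) \<Rightarrow> (nat \<Rightarrow> real) \<Rightarrow> real" where
  "eigvec_dist k n y x = Max ((\<lambda>v. \<bar>y v ^ k - x v ^ 2\<bar>) ` {..<n})"

definition Delta :: "nat \<Rightarrow> real" where
  "Delta k = Sup {eigvec_dist k n y x | n E y x.
       uniform_hypergraph k n E \<and> hg_connected n E \<and>
       hg_principal_eigvec k n E y \<and> shadow_principal_eigvec n E x}"

end

theory Submission
  imports Defs "HOL-Analysis.Convex"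
begin

text \<open>Summing the eigenequation \<open>\<rho> y\<^sub>v\<^sup>k = \<Sum>\<^sub>e\<^sub>\<ni>\<^sub>v y\<^sup>e\<close> over all vertices gives
  \<open>\<rho> = k \<Sum>\<^sub>e y\<^sup>e\<close>, hence \<open>y\<^sub>v\<^sup>k \<le> 1/k\<close>; for the shadow, Cauchy-Schwarz applied to the
  eigenequation at \<open>v\<close> gives \<open>x\<^sub>v\<^sup>2 \<le> 1/2\<close>. Both quantities are nonnegative, so they differ
  by at most \<open>1/2\<close>. Conversely, on a sunflower with many petals the centre has \<open>y\<^sup>k = 1/k\<close>
  while \<open>x\<^sup>2\<close> is close to \<open>1/2\<close>, so \<open>\<Delta>\<^sub>k \<ge> 1/2 - 2/k\<close>.\<close>

lemma uniform_hypergraph_finite: "uniform_hypergraph k n E \<Longrightarrow> finite E"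
  unfolding uniform_hypergraph_def by (rule finite_subset[of E "Pow {..<n}"]) auto

lemma uniform_hypergraph_edgeD:
  assumes "uniform_hypergraph k n E" "e \<in> E"
  shows "e \<subseteq> {..<n}" "card e = k"
  using assms unfolding uniform_hypergraph_def by auto

lemma uniform_hypergraph_edge_finite:
  "uniform_hypergraph k n E \<Longrightarrow> e \<in> E \<Longrightarrow> k > 0 \<Longrightarrow> finite e"
  using uniform_hypergraph_edgeD(2) card.infinite by fastforce

lemma sum_vertices_edges_swap:
  fixes f :: "nat \<Rightarrow> nat set \<Rightarrow> 'a::comm_monoid_add"
  assumes "finite E" "\<forall>e\<in>E. e \<subseteq> {..<n}"
  shows "(\<Sum>i<n. \<Sum>e\<in>{e\<in>E. i \<in> e}. f i e) = (\<Sum>e\<in>E. \<Sum>i\<in>e. f i e)"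
proof -
  have "(\<Sum>i<n. \<Sum>e\<in>{e\<in>E. i \<in> e}. f i e) = (\<Sum>e\<in>E. \<Sum>i\<in>{i\<in>{..<n}. i \<in> e}. f i e)"
    using sum.swap_restrict[OF finite_lessThan assms(1), of f "\<lambda>i e. i \<in> e"] by simp
  also have "\<dots> = (\<Sum>e\<in>E. \<Sum>i\<in>e. f i e)"
    by (rule sum.cong) (use assms in \<open>auto intro!: sum.cong\<close>)
  finally show ?thesis .
qed

lemma prod_le_sum_power_div_card:
  fixes w :: "'a \<Rightarrow> real"
  assumes "finite S" "card S = k" "k > 0" "\<And>i. i \<in> S \<Longrightarrow> w i \<ge> 0"
  shows "(\<Prod>i\<in>S. w i) \<le> (\<Sum>i\<in>S. w i ^ k) / k"
proof -
  have "S \<noteq> {}" using assms by auto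
  then have "(\<Prod>i\<in>S. w i ^ k) powr (1 / k) \<le> (\<Sum>i\<in>S. w i ^ k / k)"
    using arith_geom_mean[of S "\<lambda>i. w i ^ k"] assms by simp
  moreover have "(\<Prod>i\<in>S. w i ^ k) powr (1 / k) = (\<Prod>i\<in>S. w i)"
  proof -
    define P where "P = (\<Prod>i\<in>S. w i)"
    have "P \<ge> 0" unfolding P_def using assms by (simp add: prod_nonneg)
    then have "(P ^ k) powr (1 / k) = P"
      using assms by (cases "P = 0") (simp_all add: powr_realpow[symmetric] powr_powr)
    then show ?thesis by (simp add: P_def prod_power_distrib)
  qed
  ultimately show ?thesis by (simp add: sum_divide_distrib)
qed

section \<open>Eigenvectors of uniform hypergraphs\<close>

definition hg_eigenpair :: "nat \<Rightarrow> nat \<Rightarrow> nat set set \<Rightarrow> real \<Rightarrow> (nat \<Rightarrow> real) \<Rightarrow> bool" where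
  "hg_eigenpair k n E r y \<longleftrightarrow>
     (\<forall>i<n. r * y i ^ (k - 1) = (\<Sum>e\<in>{e\<in>E. i \<in> e}. \<Prod>v\<in>e - {i}. y v))"

lemma hg_principal_eigvec_iff:
  "hg_principal_eigvec k n E y \<longleftrightarrow>
     (\<forall>i<n. y i > 0) \<and> (\<Sum>i<n. y i ^ k) = 1 \<and> hg_eigenpair k n E (hg_spectral_radius k n E) y"
  unfolding hg_principal_eigvec_def hg_eigenpair_def by simp

lemma hg_eigenpair_vertex:
  assumes U: "uniform_hypergraph k n E" and k: "k > 0" and eig: "hg_eigenpair k n E r y"
    and i: "i < n"
  shows "r * y i ^ k = (\<Sum>e\<in>{e\<in>E. i \<in> e}. \<Prod>v\<in>e. y v)"
proof -
  have "r * y i ^ k = y i * (r * y i ^ (k - 1))"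
    using k by (cases k) auto
  also have "\<dots> = (\<Sum>e\<in>{e\<in>E. i \<in> e}. y i * (\<Prod>v\<in>e - {i}. y v))"
    using eig i unfolding hg_eigenpair_def by (simp add: sum_distrib_left)
  also have "\<dots> = (\<Sum>e\<in>{e\<in>E. i \<in> e}. \<Prod>v\<in>e. y v)"
    using uniform_hypergraph_edge_finite[OF U _ k] by (intro sum.cong) (auto simp: prod.remove)
  finally show ?thesis .
qed

lemma hg_eigenpair_total:
  assumes U: "uniform_hypergraph k n E" and k: "k > 0" and eig: "hg_eigenpair k n E r y"
  shows "r * (\<Sum>i<n. y i ^ k) = k * (\<Sum>e\<in>E. \<Prod>v\<in>e. y v)"
proof -
  have "r * (\<Sum>i<n. y i ^ k) = (\<Sum>i<n. \<Sum>e\<in>{e\<in>E. i \<in> e}. \<Prod>v\<in>e. y v)"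
    using hg_eigenpair_vertex[OF U k eig] by (simp add: sum_distrib_left)
  also have "\<dots> = (\<Sum>e\<in>E. \<Sum>i\<in>e. \<Prod>v\<in>e. y v)"
    using uniform_hypergraph_finite[OF U] uniform_hypergraph_edgeD(1)[OF U]
    by (intro sum_vertices_edges_swap) auto
  also have "\<dots> = k * (\<Sum>e\<in>E. \<Prod>v\<in>e. y v)"
    using uniform_hypergraph_edgeD(2)[OF U] by (simp add: sum_distrib_left)
  finally show ?thesis .
qed

text \<open>A positive eigenvector certifies its eigenvalue as the maximum: writing \<open>\<bar>z\<bar> = w y\<close>,
  AM-GM on every edge gives \<open>k \<bar>z\<^sup>e\<bar> \<le> y\<^sup>e \<Sum>\<^sub>v\<^sub>\<in>\<^sub>e w\<^sub>v\<^sup>k\<close>, and summing with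
  the eigenequation turns the right-hand side into \<open>r \<Sum>\<^sub>i \<bar>z\<^sub>i\<bar>\<^sup>k\<close>.\<close>

lemma hg_spectral_radius_eq_eigenvalue:
  assumes U: "uniform_hypergraph k n E" and k: "k > 0"
    and pos: "\<forall>i<n. y i > 0" and norm: "(\<Sum>i<n. y i ^ k) = 1"
    and eig: "hg_eigenpair k n E r y"
  shows "hg_spectral_radius k n E = r"
proof -
  have EU: "\<And>e. e \<in> E \<Longrightarrow> e \<subseteq> {..<n}" using uniform_hypergraph_edgeD(1)[OF U] .
  have fe: "\<And>e. e \<in> E \<Longrightarrow> finite e" using uniform_hypergraph_edge_finite[OF U _ k] .
  have ye: "\<And>e v. e \<in> E \<Longrightarrow> v \<in> e \<Longrightarrow> y v > 0" using EU pos by blast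
  let ?S = "{real k * (\<Sum>e\<in>E. \<Prod>v\<in>e. z v) | z :: nat \<Rightarrow> real. (\<Sum>i<n. \<bar>z i\<bar> ^ k) = 1}"
  have "r = real k * (\<Sum>e\<in>E. \<Prod>v\<in>e. y v)"
    using hg_eigenpair_total[OF U k eig] norm by simp
  moreover have "(\<Sum>i<n. \<bar>y i\<bar> ^ k) = (\<Sum>i<n. y i ^ k)"
    using pos by (intro sum.cong) auto
  ultimately have mem: "r \<in> ?S" using norm by auto
  have ub: "t \<le> r" if tS: "t \<in> ?S" for t
  proof -
    obtain z where t: "t = real k * (\<Sum>e\<in>E. \<Prod>v\<in>e. z v)" and zn: "(\<Sum>i<n. \<bar>z i\<bar> ^ k) = 1"
      using tS by blast
    define w where "w i = \<bar>z i\<bar> / y i" for i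
    have edge: "real k * (\<Prod>v\<in>e. z v) \<le> (\<Sum>v\<in>e. (\<Prod>u\<in>e. y u) * w v ^ k)" if e: "e \<in> E" for e
    proof -
      have "(\<Prod>v\<in>e. z v) \<le> (\<Prod>v\<in>e. \<bar>z v\<bar>)"
        by (metis abs_ge_self abs_prod)
      also have "\<dots> = (\<Prod>v\<in>e. y v) * (\<Prod>v\<in>e. w v)"
        using ye[OF e] by (simp add: w_def prod.distrib[symmetric] less_imp_neq[symmetric])
      also have "\<dots> \<le> (\<Prod>v\<in>e. y v) * ((\<Sum>v\<in>e. w v ^ k) / k)"
        using fe[OF e] uniform_hypergraph_edgeD(2)[OF U e] k ye[OF e]
        by (intro mult_left_mono prod_le_sum_power_div_card prod_nonneg)
          (auto simp: w_def less_imp_le)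
      finally show ?thesis using k by (simp add: sum_distrib_left field_simps)
    qed
    have "t \<le> (\<Sum>e\<in>E. \<Sum>v\<in>e. (\<Prod>u\<in>e. y u) * w v ^ k)"
      unfolding t sum_distrib_left by (rule sum_mono) (use edge in auto)
    also have "\<dots> = (\<Sum>i<n. \<Sum>e\<in>{e\<in>E. i \<in> e}. (\<Prod>u\<in>e. y u) * w i ^ k)"
      using uniform_hypergraph_finite[OF U] EU by (intro sum_vertices_edges_swap[symmetric]) auto
    also have "\<dots> = (\<Sum>i<n. w i ^ k * (r * y i ^ k))"
      using hg_eigenpair_vertex[OF U k eig]
      by (intro sum.cong) (simp_all add: sum_distrib_right[symmetric] mult.commute)
    also have "\<dots> = (\<Sum>i<n. r * \<bar>z i\<bar> ^ k)"
      using pos by (intro sum.cong) (auto simp: w_def power_divide)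
    also have "\<dots> = r" using zn by (simp add: sum_distrib_left[symmetric])
    finally show ?thesis .
  qed
  show ?thesis unfolding hg_spectral_radius_def
    by (rule cSup_eq_maximum) (use mem ub in auto)
qed

lemma hg_principal_eigvec_pow_le:
  assumes U: "uniform_hypergraph k n E" and k: "k > 0" and Y: "hg_principal_eigvec k n E y"
    and ne: "E \<noteq> {}" and v: "v < n"
  shows "y v ^ k \<le> 1 / k"
proof -
  define r where "r = hg_spectral_radius k n E"
  define P where "P = (\<Sum>e\<in>E. \<Prod>v\<in>e. y v)"
  have pos: "\<forall>i<n. y i > 0" and norm: "(\<Sum>i<n. y i ^ k) = 1" and eig: "hg_eigenpair k n E r y"
    using Y unfolding hg_principal_eigvec_iff r_def by auto
  have fE: "finite E" using uniform_hypergraph_finite[OF U] .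
  have ye: "\<And>e v. e \<in> E \<Longrightarrow> v \<in> e \<Longrightarrow> y v > 0"
    using uniform_hypergraph_edgeD(1)[OF U] pos by blast
  have "P > 0" unfolding P_def using fE ne ye by (intro sum_pos prod_pos) auto
  have "k * P * y v ^ k = r * y v ^ k"
    using hg_eigenpair_total[OF U k eig] norm by (simp add: P_def)
  also have "\<dots> = (\<Sum>e\<in>{e\<in>E. v \<in> e}. \<Prod>u\<in>e. y u)"
    using hg_eigenpair_vertex[OF U k eig v] .
  also have "\<dots> \<le> P"
    unfolding P_def using fE ye by (intro sum_mono2 prod_nonneg) (auto simp: less_imp_le)
  finally have "P * (k * y v ^ k) \<le> P * 1" by (simp add: algebra_simps)
  then have "k * y v ^ k \<le> 1" using \<open>P > 0\<close> by (simp only: mult_le_cancel_left_pos)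
  then show ?thesis using k by (simp add: field_simps)
qed

section \<open>Eigenvectors of the clique shadow\<close>

text \<open>Comparing \<open>A\<^sup>2x = \<lambda>\<^sup>2x\<close> at \<open>v\<close> with its diagonal term gives \<open>\<Sum>\<^sub>j A\<^sub>v\<^sub>j\<^sup>2 \<le> \<lambda>\<^sup>2\<close>; Cauchy-Schwarz on
  \<open>\<lambda> x\<^sub>v = \<Sum>\<^sub>j\<^sub>\<noteq>\<^sub>v A\<^sub>v\<^sub>j x\<^sub>j\<close> then yields \<open>\<lambda>\<^sup>2 x\<^sub>v\<^sup>2 \<le> \<lambda>\<^sup>2 (1 - x\<^sub>v\<^sup>2)\<close>.\<close>

lemma symmetric_eigvec_sq_le_half:
  fixes A :: "nat \<Rightarrow> nat \<Rightarrow> real" and x :: "nat \<Rightarrow> real"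
  assumes sym: "\<And>i j. A i j = A j i" and nonneg: "\<And>i j. A i j \<ge> 0" and diag: "A v v = 0"
    and pos: "\<forall>i<n. x i > 0" and norm: "(\<Sum>i<n. x i ^ 2) = 1"
    and eig: "\<forall>i<n. (\<Sum>j<n. A i j * x j) = lam * x i" and lam: "lam > 0" and v: "v < n"
  shows "x v ^ 2 \<le> 1 / 2"
proof -
  have xv: "x v > 0" using pos v by auto
  have row_sq: "(\<Sum>j<n. A v j ^ 2) \<le> lam ^ 2"
  proof -
    have "x v * (\<Sum>j<n. A v j ^ 2) = (\<Sum>j<n. A v j * (A j v * x v))"
      by (simp add: sum_distrib_left power2_eq_square sym algebra_simps)
    also have "\<dots> \<le> (\<Sum>j<n. A v j * (\<Sum>l<n. A j l * x l))"
      using v pos nonneg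
      by (intro sum_mono mult_left_mono member_le_sum mult_nonneg_nonneg) (auto simp: less_imp_le)
    also have "\<dots> = lam * (\<Sum>j<n. A v j * x j)"
      using eig by (simp add: sum_distrib_left algebra_simps)
    also have "\<dots> = x v * lam ^ 2"
      using eig v by (simp add: power2_eq_square)
    finally show ?thesis using xv by simp
  qed
  have "(\<Sum>j<n. A v j * x j) = A v v * x v + (\<Sum>j\<in>{..<n} - {v}. A v j * x j)"
    using v by (simp add: sum.remove)
  then have "lam * x v = (\<Sum>j\<in>{..<n} - {v}. A v j * x j)"
    using eig v diag by simp
  then have "(lam * x v) ^ 2 = (\<Sum>j\<in>{..<n} - {v}. A v j * x j) ^ 2" by simp
  also have "\<dots> \<le> (\<Sum>j\<in>{..<n} - {v}. A v j ^ 2) * (\<Sum>j\<in>{..<n} - {v}. x j ^ 2)"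
    by (rule Cauchy_Schwarz_ineq_sum)
  also have "\<dots> \<le> lam ^ 2 * (1 - x v ^ 2)"
  proof (rule mult_mono)
    have "(\<Sum>j\<in>{..<n} - {v}. A v j ^ 2) \<le> (\<Sum>j<n. A v j ^ 2)"
      by (rule sum_mono2) auto
    then show "(\<Sum>j\<in>{..<n} - {v}. A v j ^ 2) \<le> lam ^ 2" using row_sq by simp
    show "(\<Sum>j\<in>{..<n} - {v}. x j ^ 2) \<le> 1 - x v ^ 2"
      using norm v by (simp add: sum.remove)
  qed (simp_all add: sum_nonneg)
  finally have "lam ^ 2 * x v ^ 2 \<le> lam ^ 2 * (1 - x v ^ 2)" by (simp add: power_mult_distrib)
  then show ?thesis using lam by simp
qed

lemma hg_connected_vertex_in_edge:
  assumes C: "hg_connected n E" and n: "n \<ge> 2" and v: "v < n"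
  obtains e where "e \<in> E" "v \<in> e"
proof -
  define u where "u = (if v = 0 then 1 else (0::nat))"
  have u: "u < n" "u \<noteq> v" using n v by (auto simp: u_def)
  have "(v, u) \<in> {(a, b). \<exists>e\<in>E. a \<in> e \<and> b \<in> e}\<^sup>*"
    using C u v unfolding hg_connected_def by blast
  then show ?thesis
    using u that by (cases rule: converse_rtranclE) auto
qed

lemma shadow_eigenvalue_pos:
  assumes U: "uniform_hypergraph k n E" and k: "k \<ge> 2"
    and pos: "\<forall>i<n. x i > 0" and eig: "\<forall>i<n. (\<Sum>j<n. shadow_mult E i j * x j) = lam * x i"
    and e: "e \<in> E" "v \<in> e"
  shows "lam > 0"
proof -
  have en: "e \<subseteq> {..<n}" and ek: "card e = k" using uniform_hypergraph_edgeD[OF U e(1)] by auto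
  have "card (e - {v}) > 0"
    using k e(2) ek uniform_hypergraph_edge_finite[OF U e(1)] by (simp add: card_Diff_singleton)
  then obtain w where "w \<in> e - {v}"
    by (auto simp: card_gt_0_iff)
  then have w: "w \<in> e" "w \<noteq> v" by auto
  have "e \<in> {e\<in>E. v \<in> e \<and> w \<in> e}" using e w by auto
  then have "card {e\<in>E. v \<in> e \<and> w \<in> e} > 0"
    using uniform_hypergraph_finite[OF U] by (auto simp: card_gt_0_iff)
  then have "0 < shadow_mult E v w * x w"
    using w en pos by (auto simp: shadow_mult_def)
  also have "\<dots> \<le> (\<Sum>j<n. shadow_mult E v j * x j)"
    using w en pos by (intro member_le_sum mult_nonneg_nonneg) (auto simp: shadow_mult_def less_imp_le)
  also have "\<dots> = lam * x v" using eig e en by auto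
  finally show ?thesis using pos e en by (auto simp: zero_less_mult_iff)
qed

lemma shadow_mult_commute: "shadow_mult E u v = shadow_mult E v u"
  unfolding shadow_mult_def by (auto intro!: arg_cong[where f = card])

lemma shadow_principal_eigvec_sq_le_half:
  assumes U: "uniform_hypergraph k n E" and k: "k \<ge> 2" and X: "shadow_principal_eigvec n E x"
    and e: "e \<in> E" "v \<in> e"
  shows "x v ^ 2 \<le> 1 / 2"
proof -
  have pos: "\<forall>i<n. x i > 0" and norm: "(\<Sum>i<n. x i ^ 2) = 1"
    using X unfolding shadow_principal_eigvec_def by auto
  obtain lam where eig: "\<forall>i<n. (\<Sum>j<n. shadow_mult E i j * x j) = lam * x i"
    using X unfolding shadow_principal_eigvec_def by auto
  have "v < n" using uniform_hypergraph_edgeD(1)[OF U e(1)] e(2) by auto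
  moreover note shadow_mult_commute
  moreover have "shadow_mult E i j \<ge> 0" for i j
    unfolding shadow_mult_def by simp
  moreover have "shadow_mult E v v = 0"
    unfolding shadow_mult_def by simp
  ultimately show ?thesis
    using symmetric_eigvec_sq_le_half[OF _ _ _ pos norm eig shadow_eigenvalue_pos[OF U k pos eig e]]
    by blast
qed

text \<open>A single vertex is the one case without edges: there \<open>y\<^sub>v\<^sup>k = x\<^sub>v\<^sup>2 = 1\<close>.\<close>

lemma eigvec_dist_le_half:
  assumes k: "k \<ge> 2" and U: "uniform_hypergraph k n E" and C: "hg_connected n E"
    and Y: "hg_principal_eigvec k n E y" and X: "shadow_principal_eigvec n E x"
  shows "eigvec_dist k n y x \<le> 1 / 2"
proof -
  have ny: "(\<Sum>i<n. y i ^ k) = 1" and yp: "\<forall>i<n. y i > 0"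
    using Y unfolding hg_principal_eigvec_def by auto
  have nx: "(\<Sum>i<n. x i ^ 2) = 1" and xp: "\<forall>i<n. x i > 0"
    using X unfolding shadow_principal_eigvec_def by auto
  have "n \<noteq> 0"
  proof
    assume "n = 0"
    with ny show False by simp
  qed
  have "\<bar>y v ^ k - x v ^ 2\<bar> \<le> 1 / 2" if v: "v < n" for v
  proof (cases "n = 1")
    case True
    then show ?thesis using ny nx v by simp
  next
    case False
    with \<open>n \<noteq> 0\<close> have "n \<ge> 2" by linarith
    then obtain e where e: "e \<in> E" "v \<in> e"
      using hg_connected_vertex_in_edge[OF C _ v] by blast
    have "y v ^ k \<le> 1 / k" using hg_principal_eigvec_pow_le[OF U _ Y _ v] k e by auto
    also have "1 / k \<le> (1 / 2 :: real)" using k by (simp add: field_simps)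
    finally have "y v ^ k \<le> 1 / 2" .
    moreover have "x v ^ 2 \<le> 1 / 2" using shadow_principal_eigvec_sq_le_half[OF U k X e] .
    moreover have "y v ^ k \<ge> 0" "x v ^ 2 \<ge> 0" using yp v by (auto simp: less_imp_le)
    ultimately show ?thesis by linarith
  qed
  then show ?thesis unfolding eigvec_dist_def using \<open>n \<noteq> 0\<close> by (subst Max_le_iff) auto
qed

section \<open>Sunflowers\<close>

definition sunflower_edge :: "nat \<Rightarrow> nat \<Rightarrow> nat set" where
  "sunflower_edge p i = insert 0 {1 + i * p ..< 1 + (i + 1) * p}"

definition sunflower :: "nat \<Rightarrow> nat \<Rightarrow> nat set set" where
  "sunflower p m = sunflower_edge p ` {..<m}"

lemma zero_mem_sunflower_edge: "0 \<in> sunflower_edge p i"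
  unfolding sunflower_edge_def by simp

lemma mem_sunflower_edge_iff:
  assumes "v \<ge> 1" "p > 0"
  shows "v \<in> sunflower_edge p i \<longleftrightarrow> (v - 1) div p = i"
proof -
  have "v \<in> sunflower_edge p i \<longleftrightarrow> i * p \<le> v - 1 \<and> v - 1 < (i + 1) * p"
    using assms unfolding sunflower_edge_def by auto
  also have "\<dots> \<longleftrightarrow> (v - 1) div p = i"
  proof
    assume "i * p \<le> v - 1 \<and> v - 1 < (i + 1) * p"
    then show "(v - 1) div p = i"
      by (intro div_nat_eqI) (simp_all add: mult.commute)
  next
    assume "(v - 1) div p = i"
    then show "i * p \<le> v - 1 \<and> v - 1 < (i + 1) * p"
      using div_times_less_eq_dividend[of "v - 1" p] div_less_iff_less_mult[OF assms(2), of "v - 1" "i + 1"]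
      by simp
  qed
  finally show ?thesis .
qed

lemma sunflower_edge_minus_centre: "sunflower_edge p i - {0} = {1 + i * p ..< 1 + (i + 1) * p}"
  unfolding sunflower_edge_def by auto

lemma sunflower_edge_minus_petal_vertex:
  "v \<noteq> 0 \<Longrightarrow> sunflower_edge p i - {v} = insert 0 ({1 + i * p ..< 1 + (i + 1) * p} - {v})"
  unfolding sunflower_edge_def by auto

lemma card_sunflower_edge: "card (sunflower_edge p i) = p + 1"
  unfolding sunflower_edge_def by (simp add: card_insert_if)

lemma sunflower_edge_subset: "i < m \<Longrightarrow> sunflower_edge p i \<subseteq> {..< 1 + m * p}"
  using mult_le_mono1[of "i + 1" m p] unfolding sunflower_edge_def by auto

lemma inj_on_sunflower_edge: "p > 0 \<Longrightarrow> inj_on (sunflower_edge p) A"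
proof (rule inj_onI)
  fix i j assume p: "p > 0" and eq: "sunflower_edge p i = sunflower_edge p j"
  have "1 + i * p \<in> sunflower_edge p i"
    using p unfolding sunflower_edge_def by simp
  then have "1 + i * p \<in> sunflower_edge p j" using eq by simp
  then show "i = j" using mem_sunflower_edge_iff[of "1 + i * p" p j] p by simp
qed

lemma sunflower_petal_index_less:
  fixes v m p :: nat
  assumes "1 \<le> v" "v < 1 + m * p" "p > 0"
  shows "(v - 1) div p < m"
  using assms by (simp add: div_less_iff_less_mult)

lemma sunflower_edges_at_petal_vertex:
  assumes "1 \<le> v" "v < 1 + m * p" "p > 0"
  shows "{e\<in>sunflower p m. v \<in> e} = {sunflower_edge p ((v - 1) div p)}"
  using sunflower_petal_index_less[OF assms] mem_sunflower_edge_iff[of v p] assms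
  unfolding sunflower_def by auto

lemma sunflower_edges_at_centre: "{e\<in>sunflower p m. 0 \<in> e} = sunflower p m"
  unfolding sunflower_def using zero_mem_sunflower_edge by auto

lemma uniform_hypergraph_sunflower: "uniform_hypergraph (p + 1) (1 + m * p) (sunflower p m)"
  unfolding uniform_hypergraph_def sunflower_def
  using card_sunflower_edge sunflower_edge_subset by auto

lemma hg_connected_sunflower:
  assumes p: "p > 0" and m: "m > 0"
  shows "hg_connected (1 + m * p) (sunflower p m)"
proof -
  let ?R = "{(a, b). \<exists>e\<in>sunflower p m. a \<in> e \<and> b \<in> e}"
  have centre: "(u, 0) \<in> ?R \<and> (0, u) \<in> ?R" if u: "u < 1 + m * p" for u
  proof (cases "u = 0")
    case True
    then show ?thesis using m zero_mem_sunflower_edge unfolding sunflower_def by blast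
  next
    case False
    then have "{e\<in>sunflower p m. u \<in> e} \<noteq> {}"
      using sunflower_edges_at_petal_vertex[of u m p] u p by simp
    then show ?thesis
      using zero_mem_sunflower_edge unfolding sunflower_def by blast
  qed
  show ?thesis unfolding hg_connected_def
    using centre by (meson r_into_rtrancl rtrancl_trans)
qed

lemma sunflower_petal_vertex_in_block:
  fixes v p :: nat
  assumes "1 \<le> v" "p > 0"
  shows "v \<in> {1 + (v - 1) div p * p ..< 1 + ((v - 1) div p + 1) * p}"
  using mem_sunflower_edge_iff[OF assms, of "(v - 1) div p"] assms
  unfolding sunflower_edge_def by auto

lemma hg_principal_eigvec_sunflower:
  fixes a b :: real
  assumes p: "p > 0" and m: "m > 0"
    and a: "a > 0" "a ^ (p + 1) = 1 / (p + 1)" and b: "b > 0" "b ^ (p + 1) = 1 / ((p + 1) * m)"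
  shows "hg_principal_eigvec (p + 1) (1 + m * p) (sunflower p m) (\<lambda>v. if v = 0 then a else b)"
proof -
  define n where "n = 1 + m * p"
  define y where "y = (\<lambda>v::nat. if v = 0 then a else b)"
  have pos: "\<forall>i<n. y i > 0" using a b by (simp add: y_def)
  have "(\<Sum>i<n. y i ^ (p + 1)) = a ^ (p + 1) + (\<Sum>i\<in>{..<n} - {0}. b ^ (p + 1))"
    by (subst sum.remove[of _ 0]) (auto simp: n_def y_def intro!: sum.cong)
  also have "\<dots> = a ^ (p + 1) + real (m * p) * b ^ (p + 1)"
    by (simp add: n_def)
  also have "\<dots> = 1"
    unfolding a(2) b(2) using m by (simp add: divide_simps)
  finally have norm: "(\<Sum>i<n. y i ^ (p + 1)) = 1" .
  have eig: "hg_eigenpair (p + 1) n (sunflower p m) (a / b) y"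
    unfolding hg_eigenpair_def
  proof (intro allI impI)
    fix i assume i: "i < n"
    show "a / b * y i ^ (p + 1 - 1) = (\<Sum>e\<in>{e\<in>sunflower p m. i \<in> e}. \<Prod>v\<in>e - {i}. y v)"
    proof (cases "i = 0")
      case True
      have "(\<Sum>e\<in>{e\<in>sunflower p m. i \<in> e}. \<Prod>v\<in>e - {i}. y v)
          = (\<Sum>e\<in>sunflower p m. \<Prod>v\<in>e - {0}. y v)"
        using True sunflower_edges_at_centre by simp
      also have "\<dots> = (\<Sum>j<m. \<Prod>v\<in>sunflower_edge p j - {0}. y v)"
        unfolding sunflower_def by (simp add: sum.reindex[OF inj_on_sunflower_edge[OF p]])
      also have "\<dots> = m * b ^ p"
        by (simp add: sunflower_edge_minus_centre y_def)
      also have "\<dots> = m * b ^ (p + 1) / b"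
        using b(1) by simp
      also have "\<dots> = a ^ (p + 1) / b"
        unfolding a(2) b(2) using m by (simp add: divide_simps)
      finally show ?thesis using True by (simp add: y_def)
    next
      case False
      define q where "q = (i - 1) div p"
      have i1: "1 \<le> i" "i < 1 + m * p" using False i n_def by auto
      have "(\<Sum>e\<in>{e\<in>sunflower p m. i \<in> e}. \<Prod>v\<in>e - {i}. y v)
          = (\<Prod>v\<in>insert 0 ({1 + q * p ..< 1 + (q + 1) * p} - {i}). y v)"
        unfolding sunflower_edges_at_petal_vertex[OF i1 p]
        by (simp add: sunflower_edge_minus_petal_vertex[OF False] q_def)
      also have "\<dots> = a * b ^ (p - 1)"
        using sunflower_petal_vertex_in_block[OF i1(1) p] by (simp add: y_def q_def)
      also have "\<dots> = a / b * b ^ p"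
        using p b(1) by (cases p) auto
      finally show ?thesis using False by (simp add: y_def)
    qed
  qed
  have "hg_spectral_radius (p + 1) n (sunflower p m) = a / b"
    using hg_spectral_radius_eq_eigenvalue[OF uniform_hypergraph_sunflower[of p m, folded n_def]
        _ pos norm eig] by simp
  then show ?thesis
    using pos norm eig unfolding hg_principal_eigvec_iff by (simp add: n_def y_def)
qed

lemma shadow_mult_single_edge:
  assumes "{e\<in>E. u \<in> e} = {f}"
  shows "shadow_mult E u v = (if v \<in> f - {u} then 1 else 0)"
proof -
  have "{e\<in>E. u \<in> e \<and> v \<in> e} = (if v \<in> f then {f} else {})"
    using assms by auto
  then show ?thesis unfolding shadow_mult_def by auto
qed

lemma sum_shadow_mult_single_edge:
  assumes "{e\<in>E. u \<in> e} = {f}" "f \<subseteq> {..<n}"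
  shows "(\<Sum>j<n. shadow_mult E u j * x j) = (\<Sum>j\<in>f - {u}. x j)"
proof -
  have "(\<Sum>j<n. shadow_mult E u j * x j) = (\<Sum>j\<in>{..<n} \<inter> (f - {u}). x j)"
    unfolding shadow_mult_single_edge[OF assms(1)] by (auto simp: sum.inter_restrict intro!: sum.cong)
  also have "{..<n} \<inter> (f - {u}) = f - {u}" using assms(2) by auto
  finally show ?thesis .
qed

text \<open>At the centre and at a petal vertex the eigenequations read \<open>\<lambda> c = m p\<close> and
  \<open>\<lambda> = c + p - 1\<close>; eliminating \<open>\<lambda>\<close> gives the hypothesis on \<open>c\<close>.\<close>

lemma shadow_principal_eigvec_sunflower:
  fixes c :: real
  assumes p: "p > 0" and c: "c > 0" and c_eq: "c * (c + p - 1) = m * p"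
  shows "shadow_principal_eigvec (1 + m * p) (sunflower p m)
           (\<lambda>v. (if v = 0 then c else 1) / sqrt (c ^ 2 + m * p))"
proof -
  define n where "n = 1 + m * p"
  define N where "N = sqrt (c ^ 2 + m * p)"
  define x where "x = (\<lambda>v::nat. (if v = 0 then c else 1) / N)"
  have cmp: "c ^ 2 + m * p > 0" using c by (simp add: add_pos_nonneg)
  then have N: "N > 0" "N ^ 2 = c ^ 2 + m * p" by (simp_all add: N_def)
  have pos: "\<forall>i<n. x i > 0" using c N by (simp add: x_def)
  have "(\<Sum>i<n. x i ^ 2) = x 0 ^ 2 + (\<Sum>i\<in>{..<n} - {0}. (1 / N) ^ 2)"
    by (subst sum.remove[of _ 0]) (auto simp: n_def x_def intro!: sum.cong)
  also have "\<dots> = (c ^ 2 + m * p) / N ^ 2"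
    by (simp add: n_def x_def power_divide add_divide_distrib)
  finally have norm: "(\<Sum>i<n. x i ^ 2) = 1" using N cmp by simp
  have eig: "(\<Sum>j<n. shadow_mult (sunflower p m) i j * x j) = (c + p - 1) * x i" if i: "i < n" for i
  proof (cases "i = 0")
    case True
    have "shadow_mult (sunflower p m) 0 j = (if j \<in> {..<n} - {0} then 1 else 0)" if j: "j < n" for j
    proof (cases "j = 0")
      case False
      then have "shadow_mult (sunflower p m) j 0 = 1"
        using sunflower_edges_at_petal_vertex[of j m p] j p zero_mem_sunflower_edge
        by (simp add: n_def shadow_mult_single_edge)
      then show ?thesis using False j by (simp add: shadow_mult_commute)
    qed (simp add: shadow_mult_def)
    then have "(\<Sum>j<n. shadow_mult (sunflower p m) i j * x j)
        = (\<Sum>j<n. if j \<in> {..<n} - {0} then 1 / N else 0)"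
      using True by (intro sum.cong) (auto simp: x_def)
    also have "\<dots> = (\<Sum>j\<in>{..<n} - {0}. 1 / N)"
      using sum.inter_restrict[of "{..<n}" "\<lambda>_. 1 / N" "{..<n} - {0}"] by (simp add: Int_absorb1)
    also have "\<dots> = m * p / N" by (simp add: n_def)
    also have "\<dots> = (c + p - 1) * x i"
      using True c_eq N by (simp add: x_def field_simps)
    finally show ?thesis .
  next
    case False
    define q where "q = (i - 1) div p"
    have i1: "1 \<le> i" "i < 1 + m * p" using False i n_def by auto
    have "(\<Sum>j<n. shadow_mult (sunflower p m) i j * x j) = (\<Sum>j\<in>sunflower_edge p q - {i}. x j)"
      using sunflower_edges_at_petal_vertex[OF i1 p] sunflower_edge_subset
        sunflower_petal_index_less[OF i1 p]
      by (intro sum_shadow_mult_single_edge) (auto simp: q_def n_def)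
    also have "\<dots> = c / N + (\<Sum>j\<in>{1 + q * p ..< 1 + (q + 1) * p} - {i}. 1 / N)"
      by (simp add: sunflower_edge_minus_petal_vertex[OF False] x_def)
    also have "\<dots> = (c + p - 1) * x i"
      using sunflower_petal_vertex_in_block[OF i1(1) p] p False
      by (simp add: q_def x_def of_nat_diff add_divide_distrib diff_divide_distrib)
    finally show ?thesis .
  qed
  show ?thesis
    unfolding shadow_principal_eigvec_def using pos norm eig by (auto simp: n_def x_def N_def)
qed

lemma sunflower_centre_gap:
  fixes p :: real
  assumes "p \<ge> 0"
  shows "1 / 2 - 1 / (p + 1) \<le> (p ^ 2 + 1) / (2 * (p ^ 2 + 1) + p - 1)"
proof -
  have "2 * (p ^ 2 + 1) + p - 1 > 0" using assms by (simp add: add_pos_nonneg)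
  then have "(p - 1) / (2 * (p + 1)) \<le> (p ^ 2 + 1) / (2 * (p ^ 2 + 1) + p - 1)"
    using assms by (simp add: divide_simps) (simp add: power2_eq_square algebra_simps)
  moreover have "1 / 2 - 1 / (p + 1) = (p - 1) / (2 * (p + 1))" using assms by (simp add: field_simps)
  ultimately show ?thesis by simp
qed

text \<open>The witness is a sunflower with \<open>k (p\<^sup>2 + 1)\<close> petals, \<open>p = k - 1\<close>, chosen so that
  \<open>c = p\<^sup>2 + 1\<close> solves the centre equation; at the centre \<open>y\<^sup>k = 1/k\<close> while \<open>x\<^sup>2 \<rightarrow> 1/2\<close>.\<close>

lemma sunflower_eigvec_dist_ge:
  assumes k: "k \<ge> 2"
  obtains n E y x where "uniform_hypergraph k n E" "hg_connected n E"
    "hg_principal_eigvec k n E y" "shadow_principal_eigvec n E x"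
    "1 / 2 - 2 / k \<le> eigvec_dist k n y x"
proof -
  define p where "p = k - 1"
  define m where "m = k * (p ^ 2 + 1)"
  define c :: real where "c = p ^ 2 + 1"
  define y where "y = (\<lambda>v::nat. if v = 0 then root k (1 / k) else root k (1 / (k * m)))"
  define x where "x = (\<lambda>v::nat. (if v = 0 then c else 1) / sqrt (c ^ 2 + real m * real p))"
  have kp: "k = p + 1" and p: "p > 0" and m: "m > 0" using k by (simp_all add: p_def m_def)
  have c_eq: "c * (c + p - 1) = real m * real p"
    unfolding c_def m_def kp by (simp add: power2_eq_square algebra_simps)
  have c: "c > 0" unfolding c_def by (simp add: add_pos_nonneg)
  have root_pow: "root (p + 1) r ^ (p + 1) = r" if "r \<ge> 0" for r :: real
    using that by (intro real_root_pow_pos2) auto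
  have Y: "hg_principal_eigvec k (1 + m * p) (sunflower p m) y"
    unfolding y_def kp using m
    by (intro hg_principal_eigvec_sunflower[OF p m])
      (use root_pow[of "1 / real (p + 1)"] root_pow[of "1 / real ((p + 1) * m)"] in
        \<open>simp_all add: algebra_simps add_pos_nonneg\<close>)
  have X: "shadow_principal_eigvec (1 + m * p) (sunflower p m) x"
    unfolding x_def by (rule shadow_principal_eigvec_sunflower[OF p c c_eq])
  have "x 0 ^ 2 = c ^ 2 / (c ^ 2 + real m * real p)"
    using c by (simp add: x_def power_divide add_pos_nonneg)
  also have "\<dots> = (c * c) / (c * (2 * c + p - 1))"
    unfolding c_eq[symmetric] by (simp add: power2_eq_square algebra_simps)
  also have "\<dots> = c / (2 * c + p - 1)"
    using c by simp
  finally have "1 / 2 - 1 / k \<le> x 0 ^ 2"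
    using sunflower_centre_gap[of p] by (simp add: c_def kp ac_simps)
  moreover have "y 0 ^ k = 1 / k" using k by (simp add: y_def)
  moreover have "\<bar>y 0 ^ k - x 0 ^ 2\<bar> \<le> eigvec_dist k (1 + m * p) y x"
    unfolding eigvec_dist_def by (rule Max_ge) auto
  ultimately have "1 / 2 - 2 / k \<le> eigvec_dist k (1 + m * p) y x" by simp
  then show ?thesis
    using that[OF uniform_hypergraph_sunflower[of p m, folded kp] hg_connected_sunflower[OF p m] Y X]
    by blast
qed

lemma Delta_bounds:
  assumes k: "k \<ge> 2"
  shows "1 / 2 - 2 / k \<le> Delta k" "Delta k \<le> 1 / 2"
proof -
  define S where "S = {eigvec_dist k n y x | n E y x.
       uniform_hypergraph k n E \<and> hg_connected n E \<and>
       hg_principal_eigvec k n E y \<and> shadow_principal_eigvec n E x}"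
  have Delta: "Delta k = Sup S" unfolding Delta_def S_def ..
  have le_half: "t \<le> 1 / 2" if "t \<in> S" for t
    using that eigvec_dist_le_half[OF k] unfolding S_def by auto
  obtain n E y x where U: "uniform_hypergraph k n E" and C: "hg_connected n E"
    and Y: "hg_principal_eigvec k n E y" and X: "shadow_principal_eigvec n E x"
    and ge: "1 / 2 - 2 / k \<le> eigvec_dist k n y x"
    by (rule sunflower_eigvec_dist_ge[OF k])
  have mem: "eigvec_dist k n y x \<in> S" unfolding S_def using U C Y X by blast
  have "bdd_above S" using le_half by (intro bdd_aboveI[of _ "1 / 2"])
  then have "eigvec_dist k n y x \<le> Delta k" unfolding Delta using mem by (rule cSup_upper[rotated])
  then show "1 / 2 - 2 / k \<le> Delta k" using ge by linarith
  show "Delta k \<le> 1 / 2" unfolding Delta using mem le_half by (intro cSup_least) auto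
qed

lemma Delta_tendsto_half: "Delta \<longlonglongrightarrow> 1 / 2"
proof (rule tendsto_sandwich[OF _ _ _ tendsto_const])
  show "\<forall>\<^sub>F k in sequentially. 1 / 2 - 2 / real k \<le> Delta k"
    and "\<forall>\<^sub>F k in sequentially. Delta k \<le> 1 / 2"
    using Delta_bounds by (auto intro: eventually_sequentiallyI[of 2])
  show "(\<lambda>k. 1 / 2 - 2 / real k) \<longlonglongrightarrow> 1 / 2"
    using tendsto_diff[OF tendsto_const lim_const_over_n[of 2]] by simp
qed

theorem theorem6p1:
  fixes k n :: nat and E :: "nat set set" and y x :: "nat \<Rightarrow> real"
  assumes "k \<ge> 3"
    and "uniform_hypergraph k n E" and "hg_connected n E"
    and "hg_principal_eigvec k n E y" and "shadow_principal_eigvec n E x"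
  shows "eigvec_dist k n y x \<le> 1 / 2 \<and> (Delta \<longlongrightarrow> 1 / 2) sequentially"
  using eigvec_dist_le_half[of k n E y x] assms Delta_tendsto_half by simp

end
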